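(* Let $\mathcal{A}$ and $\mathcal{B}$ be $C^{*}$-algebras, let $\Xi$ be a Hilbert $\mathcal{A}$-module and $\nabla$ a Hilbert $\mathcal{B}$-module. Let $p>3$, let $\theta$ be a nonnegative real number and let $f:\Xi\rightarrow\nabla$ be a mapping such that $$\| f(\mu x+y)-\mu f(x)-f(y)\| \leq \theta\left(\|x\|^{p}+\|y\|^{p}\right),$$ $$\| f(\langle x,y\rangle z)-\langle f(x),f(y)\rangle f(z)\| \leq \theta\left(\|x\|^{p}+\|y\|^{p}+\|z\|^{p}\right),$$ $$\| f(\langle x,y\rangle^{*} z)-\langle f(x),f(y)\rangle^{*} f(z)\| \leq \theta\left(\|x\|^{p}+\|y\|^{p}+\|z\|^{p}\right)$$ for all $x,y,z\in\Xi$ and all $\mu\in\mathbb{T}$. Then there exists a unique Hilbert $C^{*}$-module $\ast$-homomorphism $H:\Xi\rightarrow\nabla$ such that $$\|f(x)-H(x)\|\leq \frac{2\theta}{2^{p}-2^{3}}\|x\|^{p}$$ for all $x\in\Xi$.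
   Context: $\mathbb{T}=\{z\in\mathbb{C}:|z|=1\}$. For a $C^{*}$-algebra $\mathcal{A}$, a (left) Hilbert $\mathcal{A}$-module is a complex linear space $\Xi$ with a compatible left $\mathcal{A}$-module action ($\lambda(ax)=(\lambda a)x=a(\lambda x)$) and a map $\langle\cdot,\cdot\rangle:\Xi\times\Xi\to\mathcal{A}$ that is linear in the first variable, satisfies $\langle ax,y\rangle=a\langle x,y\rangle$, $\langle x,y\rangle^{*}=\langle y,x\rangle$, $\langle x,x\rangle\geq 0$ with equality iff $x=0$, and such that $\Xi$ is complete in the norm $\|x\|=\|\langle x,x\rangle\|^{1/2}$. For a Hilbert $\mathcal{A}$-module $\Xi$ and a Hilbert $\mathcal{B}$-module $\nabla$, a Hilbert $C^{*}$-module homomorphism is a $\mathbb{C}$-linear map $H:\Xi\to\nabla$ with $H(\langle x,y\rangle z)=\langle H(x),H(y)\rangle H(z)$ for all $x,y,z\in\Xi$; it is a Hilbert $C^{*}$-module $\ast$-homomorphism if moreover $H(\langle x,y\rangle^{*} z)=\langle H(x),H(y)\rangle^{*} H(z)$ for all $x,y,z\in\Xi$. *)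

theory Defs
  imports "HOL-Analysis.Analysis"
begin

text \<open>A C*-algebra is modelled on a type 'a of class real_normed_algebra and banach
(complete normed, possibly non-unital, real algebra with submultiplicative norm),
together with a complex scalar multiplication extending the real one and an involution.\<close>

record 'a cstar_ops =
  cscale :: "complex \<Rightarrow> 'a \<Rightarrow> 'a"
  cstar  :: "'a \<Rightarrow> 'a"

definition cstar_algebra :: "('a::{real_normed_algebra,banach}) cstar_ops \<Rightarrow> bool" where
  "cstar_algebra A \<longleftrightarrow>
     (\<forall>r x. cscale A (complex_of_real r) x = r *\<^sub>R x) \<and>
     (\<forall>a b x. cscale A (a + b) x = cscale A a x + cscale A b x) \<and>
     (\<forall>a x y. cscale A a (x + y) = cscale A a x + cscale A a y) \<and>
     (\<forall>a b x. cscale A (a * b) x = cscale A a (cscale A b x)) \<and>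
     (\<forall>a x. norm (cscale A a x) = cmod a * norm x) \<and>
     (\<forall>a x y. cscale A a (x * y) = cscale A a x * y) \<and>
     (\<forall>a x y. cscale A a (x * y) = x * cscale A a y) \<and>
     (\<forall>x y. cstar A (x + y) = cstar A x + cstar A y) \<and>
     (\<forall>a x. cstar A (cscale A a x) = cscale A (cnj a) (cstar A x)) \<and>
     (\<forall>x y. cstar A (x * y) = cstar A y * cstar A x) \<and>
     (\<forall>x. cstar A (cstar A x) = x) \<and>
     (\<forall>x. norm (cstar A x * x) = (norm x)\<^sup>2)"

definition cstar_positive :: "('a::{real_normed_algebra,banach}) cstar_ops \<Rightarrow> 'a \<Rightarrow> bool" where
  "cstar_positive A a \<longleftrightarrow> (\<exists>b. a = cstar A b * b)"

record ('a, 'x) hmod_ops =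
  hscale :: "complex \<Rightarrow> 'x \<Rightarrow> 'x"
  hact   :: "'a \<Rightarrow> 'x \<Rightarrow> 'x"
  hip    :: "'x \<Rightarrow> 'x \<Rightarrow> 'a"

definition hilbert_module ::
  "('a::{real_normed_algebra,banach}) cstar_ops \<Rightarrow> ('a, 'x::banach) hmod_ops \<Rightarrow> bool" where
  "hilbert_module A M \<longleftrightarrow>
     cstar_algebra A \<and>
     \<comment> \<open>complex linear space structure (extending the real one of 'x)\<close>
     (\<forall>r x. hscale M (complex_of_real r) x = r *\<^sub>R x) \<and>
     (\<forall>a b x. hscale M (a + b) x = hscale M a x + hscale M b x) \<and>
     (\<forall>a x y. hscale M a (x + y) = hscale M a x + hscale M a y) \<and>
     (\<forall>a b x. hscale M (a * b) x = hscale M a (hscale M b x)) \<and>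
     \<comment> \<open>left A-module\<close>
     (\<forall>a b x. hact M (a + b) x = hact M a x + hact M b x) \<and>
     (\<forall>a x y. hact M a (x + y) = hact M a x + hact M a y) \<and>
     (\<forall>a b x. hact M (a * b) x = hact M a (hact M b x)) \<and>
     \<comment> \<open>compatibility: lambda (a x) = (lambda a) x = a (lambda x)\<close>
     (\<forall>l a x. hscale M l (hact M a x) = hact M (cscale A l a) x) \<and>
     (\<forall>l a x. hscale M l (hact M a x) = hact M a (hscale M l x)) \<and>
     \<comment> \<open>inner product\<close>
     (\<forall>x y z. hip M (x + y) z = hip M x z + hip M y z) \<and>
     (\<forall>l x y. hip M (hscale M l x) y = cscale A l (hip M x y)) \<and>
     (\<forall>a x y. hip M (hact M a x) y = a * hip M x y) \<and>
     (\<forall>x y. cstar A (hip M x y) = hip M y x) \<and>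
     (\<forall>x. cstar_positive A (hip M x x)) \<and>
     (\<forall>x. hip M x x = 0 \<longleftrightarrow> x = 0) \<and>
     \<comment> \<open>the norm of 'x (complete, by class banach) is the Hilbert module norm\<close>
     (\<forall>x. norm x = sqrt (norm (hip M x x)))"

definition hmod_hom ::
  "('a::{real_normed_algebra,banach}, 'x::banach) hmod_ops \<Rightarrow>
   ('b::{real_normed_algebra,banach}, 'y::banach) hmod_ops \<Rightarrow> ('x \<Rightarrow> 'y) \<Rightarrow> bool" where
  "hmod_hom M N H \<longleftrightarrow>
     (\<forall>x y. H (x + y) = H x + H y) \<and>
     (\<forall>l x. H (hscale M l x) = hscale N l (H x)) \<and>
     (\<forall>x y z. H (hact M (hip M x y) z) = hact N (hip N (H x) (H y)) (H z))"

definition hmod_star_hom ::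
  "('a::{real_normed_algebra,banach}) cstar_ops \<Rightarrow> ('a, 'x::banach) hmod_ops \<Rightarrow>
   ('b::{real_normed_algebra,banach}) cstar_ops \<Rightarrow> ('b, 'y::banach) hmod_ops \<Rightarrow> ('x \<Rightarrow> 'y) \<Rightarrow> bool" where
  "hmod_star_hom A M B N H \<longleftrightarrow>
     hmod_hom M N H \<and>
     (\<forall>x y z. H (hact M (cstar A (hip M x y)) z) = hact N (cstar B (hip N (H x) (H y))) (H z))"

end

theory Submission
  imports Defs
begin

text \<open>Hyers' direct method. Taking \<open>\<mu> = 1\<close> shows that \<open>f\<close> is approximately additive, so the
  increments of \<open>2\<^bsup>n\<^esup> f(2\<^bsup>-n\<^esup> x)\<close> are dominated by a geometric series of ratio \<open>2\<^bsup>1-p\<^esup>\<close>; the limit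
  \<open>H\<close> is additive and lies within \<open>2\<theta>/(2\<^sup>p - 2) \<parallel>x\<parallel>\<^sup>p\<close> of \<open>f\<close>. An approximate identity for \<open>f\<close> that
  is homogeneous of degree \<open>k\<close> (\<open>k = 1\<close> for unit scalars, \<open>k = 3\<close> for \<open>\<langle>x,y\<rangle>z\<close>) passes to \<open>H\<close>,
  because \<open>2\<^bsup>kn\<^esup>\<close> times the defect at \<open>2\<^bsup>-n\<^esup> x\<close> is of order \<open>(2\<^sup>k/2\<^sup>p)\<^sup>n\<close>: this is where \<open>p > 3\<close>
  is used. Every complex scalar is a positive integer times a sum of two unit scalars, so \<open>H\<close> is
  complex linear. Uniqueness holds because an additive map bounded by \<open>C \<parallel>x\<parallel>\<^sup>p\<close> with \<open>p > 1\<close>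
  vanishes, as halving the argument shows.\<close>

section \<open>Hilbert modules\<close>

locale hilbert_mod =
  fixes A :: "('a::{real_normed_algebra,banach}) cstar_ops"
    and M :: "('a, 'x::banach) hmod_ops"
  assumes hilbert_module: "hilbert_module A M"
begin

lemma
  shows cscale_real: "cscale A (complex_of_real r) a = r *\<^sub>R a"
    and cscale_addr: "cscale A c (a + b) = cscale A c a + cscale A c b"
    and cscale_mult: "cscale A (c * d) a = cscale A c (cscale A d a)"
    and norm_cscale: "norm (cscale A c a) = cmod c * norm a"
    and cstar_add: "cstar A (a + b) = cstar A a + cstar A b"
    and cstar_cscale: "cstar A (cscale A c a) = cscale A (cnj c) (cstar A a)"
    and cstar_mult: "cstar A (a * b) = cstar A b * cstar A a"
    and cstar_cstar: "cstar A (cstar A a) = a"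
    and norm_cstar_mult_self: "norm (cstar A a * a) = (norm a)\<^sup>2"
  using hilbert_module unfolding hilbert_module_def cstar_algebra_def by simp_all

lemma
  shows hscale_real: "hscale M (complex_of_real r) x = r *\<^sub>R x"
    and hscale_addl: "hscale M (c + d) x = hscale M c x + hscale M d x"
    and hscale_addr: "hscale M c (x + y) = hscale M c x + hscale M c y"
    and hscale_mult: "hscale M (c * d) x = hscale M c (hscale M d x)"
    and hact_addl: "hact M (a + b) x = hact M a x + hact M b x"
    and hact_addr: "hact M a (x + y) = hact M a x + hact M a y"
    and hscale_hact_left: "hscale M c (hact M a x) = hact M (cscale A c a) x"
    and hscale_hact_right: "hscale M c (hact M a x) = hact M a (hscale M c x)"
    and hip_addl: "hip M (x + y) z = hip M x z + hip M y z"
    and hip_hscalel: "hip M (hscale M c x) y = cscale A c (hip M x y)"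
    and hip_hactl: "hip M (hact M a x) y = a * hip M x y"
    and cstar_hip: "cstar A (hip M x y) = hip M y x"
    and norm_hip_self: "norm (hip M x x) = (norm x)\<^sup>2"
  using hilbert_module unfolding hilbert_module_def by auto

lemma hscale_one [simp]: "hscale M 1 x = x"
  using hscale_real[of 1 x] by simp

lemma hscale_scaleR: "hscale M c (r *\<^sub>R x) = r *\<^sub>R hscale M c x"
  by (metis hscale_real hscale_mult mult.commute)

lemma hip_addr: "hip M x (y + z) = hip M x y + hip M x z"
  by (metis cstar_hip hip_addl cstar_add)

lemma hip_hscaler: "hip M x (hscale M c y) = cscale A (cnj c) (hip M x y)"
  by (metis cstar_hip hip_hscalel cstar_cscale)

lemma hip_scaleRl: "hip M (r *\<^sub>R x) y = r *\<^sub>R hip M x y"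
  by (metis hscale_real hip_hscalel cscale_real)

lemma hip_scaleRr: "hip M x (r *\<^sub>R y) = r *\<^sub>R hip M x y"
  by (metis hscale_real hip_hscaler cscale_real complex_cnj_complex_of_real)

lemma hact_scaleRl: "hact M (r *\<^sub>R a) x = r *\<^sub>R hact M a x"
  by (metis hscale_real hscale_hact_left cscale_real)

lemma hact_scaleRr: "hact M a (r *\<^sub>R x) = r *\<^sub>R hact M a x"
  by (metis hscale_real hscale_hact_right)

lemma hact_hip_scaleR:
  "hact M (hip M (r *\<^sub>R x) (r *\<^sub>R y)) (r *\<^sub>R z) = r ^ 3 *\<^sub>R hact M (hip M x y) z"
  by (simp add: hip_scaleRl hip_scaleRr hact_scaleRl hact_scaleRr power3_eq_cube)

lemma norm_cstar: "norm (cstar A a) = norm a"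
proof -
  have le: "norm b \<le> norm (cstar A b)" for b
  proof -
    have "norm b * norm b \<le> norm (cstar A b) * norm b"
      using norm_mult_ineq[of "cstar A b" b] by (simp add: norm_cstar_mult_self power2_eq_square)
    then show ?thesis
      by (cases "b = 0") simp_all
  qed
  show ?thesis
    using le[of a] le[of "cstar A a"] by (simp add: cstar_cstar)
qed

lemma norm_hscale: "norm (hscale M c x) = cmod c * norm x"
proof -
  have "(norm (hscale M c x))\<^sup>2 = norm (hip M (hscale M c x) (hscale M c x))"
    by (simp add: norm_hip_self)
  also have "\<dots> = (cmod c * norm x)\<^sup>2"
    by (simp add: hip_hscalel hip_hscaler norm_cscale norm_hip_self power2_eq_square)
  finally have "(norm (hscale M c x))\<^sup>2 = (cmod c * norm x)\<^sup>2" .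
  then show ?thesis
    by (simp add: power2_eq_iff_nonneg)
qed

lemma norm_hact_le: "norm (hact M a x) \<le> norm a * norm x"
proof -
  have "(norm (hact M a x))\<^sup>2 = norm (a * (hip M x x * cstar A a))"
    by (metis norm_hip_self hip_hactl cstar_hip cstar_mult)
  also have "\<dots> \<le> norm a * (norm (hip M x x) * norm (cstar A a))"
    by (meson norm_mult_ineq order_trans mult_left_mono norm_ge_zero)
  also have "\<dots> = (norm a * norm x)\<^sup>2"
    by (simp add: norm_cstar norm_hip_self power2_eq_square)
  finally show ?thesis
    by (simp add: power2_le_iff_abs_le)
qed

lemma norm_hip_add_hip_le: "norm (hip M x y + hip M y x) \<le> 2 * (norm x + norm y)\<^sup>2"
proof -
  have triangle3: "norm (a - b - c) \<le> norm a + norm b + norm c" for a b c :: 'a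
    using norm_triangle_ineq4[of "a - b" c] norm_triangle_ineq4[of a b] by linarith
  have "hip M x y + hip M y x = hip M (x + y) (x + y) - hip M x x - hip M y y"
    by (simp add: hip_addl hip_addr algebra_simps)
  then have "norm (hip M x y + hip M y x) \<le> (norm (x + y))\<^sup>2 + (norm x)\<^sup>2 + (norm y)\<^sup>2"
    using triangle3[of "hip M (x + y) (x + y)" "hip M x x" "hip M y y"]
    by (simp add: norm_hip_self)
  moreover have "(norm (x + y))\<^sup>2 \<le> (norm x + norm y)\<^sup>2"
    by (simp add: norm_triangle_ineq power_mono)
  moreover have "(norm x)\<^sup>2 + (norm y)\<^sup>2 \<le> (norm x + norm y)\<^sup>2"
    by (simp add: power2_sum)
  ultimately show ?thesis
    by linarith
qed

text \<open>Polarisation: with \<open>j = \<i> y\<close>, \<open>2 \<langle>x,y\<rangle> = (\<langle>x,y\<rangle> + \<langle>y,x\<rangle>) + \<i> (\<langle>x,j\<rangle> + \<langle>j,x\<rangle>)\<close>.\<close>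

lemma norm_hip_le_sum: "norm (hip M x y) \<le> 2 * (norm x + norm y)\<^sup>2"
proof -
  define j where "j = hscale M \<i> y"
  have "cscale A \<i> (cscale A (- \<i>) a) = a" "cscale A \<i> (cscale A \<i> a) = - a" for a
    using cscale_real[of 1 a] cscale_real[of "-1" a] by (simp_all flip: cscale_mult)
  then have "2 *\<^sub>R hip M x y
      = (hip M x y + hip M y x) + cscale A \<i> (hip M x j + hip M j x)"
    by (simp add: j_def cscale_addr hip_hscaler hip_hscalel scaleR_2)
  then have "2 * norm (hip M x y)
      \<le> norm (hip M x y + hip M y x) + norm (hip M x j + hip M j x)"
    by (metis norm_scaleR abs_numeral norm_triangle_ineq norm_cscale norm_ii mult_1)
  also have "\<dots> \<le> 2 * (norm x + norm y)\<^sup>2 + 2 * (norm x + norm y)\<^sup>2"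
    using norm_hip_add_hip_le[of x y] norm_hip_add_hip_le[of x j]
    by (simp add: j_def norm_hscale)
  finally show ?thesis by simp
qed

lemma norm_hip_le: "norm (hip M x y) \<le> norm x * norm y * 8"
proof (cases "x = 0 \<or> y = 0")
  case True
  have "hip M 0 y = 0" "hip M x 0 = 0"
    using hip_scaleRl[of 0 0 y] hip_scaleRr[of x 0 0] by simp_all
  with True show ?thesis
    by auto
next
  case False
  define x' y' where "x' = (1 / norm x) *\<^sub>R x" and "y' = (1 / norm y) *\<^sub>R y"
  have "hip M x y = (norm x * norm y) *\<^sub>R hip M x' y'"
    using False by (simp add: x'_def y'_def hip_scaleRl hip_scaleRr)
  moreover have "norm (hip M x' y') \<le> 8"
    using norm_hip_le_sum[of x' y'] False by (simp add: x'_def y'_def)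
  ultimately show ?thesis
    by (simp add: mult_left_mono)
qed

lemma bounded_bilinear_hip: "bounded_bilinear (hip M)"
proof
  show "\<exists>K. \<forall>x y. norm (hip M x y) \<le> norm x * norm y * K"
    using norm_hip_le by blast
qed (simp_all add: hip_addl hip_addr hip_scaleRl hip_scaleRr)

lemma bounded_bilinear_hact: "bounded_bilinear (hact M)"
proof
  show "\<exists>K. \<forall>a x. norm (hact M a x) \<le> norm a * norm x * K"
    using norm_hact_le by (metis mult.right_neutral)
qed (simp_all add: hact_addl hact_addr hact_scaleRl hact_scaleRr)

lemma bounded_linear_hscale: "bounded_linear (hscale M c)"
  by (rule bounded_linear_intro[where K = "cmod c"])
    (simp_all add: hscale_addr hscale_scaleR norm_hscale mult.commute)

end


section \<open>Approximately additive maps\<close>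

lemma norm_scaleR_pow2_powr:
  fixes x :: "'a::real_normed_vector"
  shows "norm ((1 / 2 ^ n) *\<^sub>R x) powr p = norm x powr p / (2 powr p) ^ n"
proof -
  have "((2::real) ^ n) powr p = (2 powr p) ^ n"
    by (simp add: powr_realpow[symmetric] powr_powr powr_power mult.commute)
  then show ?thesis
    by (simp add: powr_divide)
qed

lemma scaled_norm_powr_tendsto_zero:
  fixes x :: "'a::real_normed_vector"
  assumes "real k < p"
  shows "(\<lambda>n. 2 ^ (k * n) * norm ((1 / 2 ^ n) *\<^sub>R x) powr p) \<longlonglongrightarrow> 0"
proof -
  have "(2::real) ^ k = 2 powr real k"
    by (simp add: powr_realpow)
  also have "\<dots> < 2 powr p"
    using assms by simp
  finally have "(2::real) ^ k / 2 powr p < 1"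
    by simp
  then have "(\<lambda>n. norm x powr p * (2 ^ k / 2 powr p) ^ n) \<longlonglongrightarrow> 0"
    by (intro tendsto_mult_right_zero LIMSEQ_power_zero) simp_all
  moreover have "2 ^ (k * n) * norm ((1 / 2 ^ n) *\<^sub>R x) powr p
      = norm x powr p * (2 ^ k / 2 powr p) ^ n" for n
    by (simp only: norm_scaleR_pow2_powr) (simp add: power_mult power_divide)
  ultimately show ?thesis
    by (simp only:)
qed

lemma limit_eq_zero_if_norm_le_null:
  fixes X :: "nat \<Rightarrow> 'a::real_normed_vector"
  assumes "X \<longlonglongrightarrow> L" and "\<And>n. norm (X n) \<le> B n" and "B \<longlonglongrightarrow> 0"
  shows "L = 0"
proof -
  have "X \<longlonglongrightarrow> 0"
    using assms(2,3) by (auto intro: Lim_null_comparison[where g = B])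
  with assms(1) show ?thesis
    by (rule LIMSEQ_unique)
qed

lemma geometric_increments_convergent:
  fixes X :: "nat \<Rightarrow> 'a::banach"
  assumes incr: "\<And>n. norm (X (Suc n) - X n) \<le> c * r ^ n" and "0 \<le> r" "r < 1"
  shows "convergent X" and "norm (lim X - X 0) \<le> c / (1 - r)"
proof -
  let ?d = "\<lambda>k. X (Suc k) - X k"
  have geom: "summable (\<lambda>n. c * r ^ n)"
    using assms(2,3) by (intro summable_mult summable_geometric) simp
  have norm_d: "summable (\<lambda>k. norm (?d k))"
    by (rule summable_comparison_test'[OF geom, where N = 0]) (simp add: incr)
  have "(\<lambda>n. X 0 + (\<Sum>k<n. ?d k)) \<longlonglongrightarrow> X 0 + suminf ?d"
    using norm_d
    by (intro tendsto_add tendsto_const summable_LIMSEQ) (rule summable_norm_cancel)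
  then have "X \<longlonglongrightarrow> X 0 + suminf ?d"
    by (simp add: sum_lessThan_telescope)
  then show "convergent X"
    by (auto simp: convergent_def)
  have lim: "lim X = X 0 + suminf ?d"
    using \<open>X \<longlonglongrightarrow> X 0 + suminf ?d\<close> by (rule limI)
  have "norm (suminf ?d) \<le> (\<Sum>k. norm (?d k))"
    using norm_d by (rule summable_norm)
  also have "\<dots> \<le> (\<Sum>n. c * r ^ n)"
    using incr norm_d geom by (rule suminf_le)
  also have "\<dots> = c / (1 - r)"
    using assms(2,3) by (simp add: suminf_mult suminf_geometric summable_geometric)
  finally show "norm (lim X - X 0) \<le> c / (1 - r)"
    by (simp add: lim)
qed

lemma additive_scaleR_of_nat:
  fixes h :: "'a::real_vector \<Rightarrow> 'b::real_vector"
  assumes add: "\<And>x y. h (x + y) = h x + h y"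
  shows "h (of_nat m *\<^sub>R x) = of_nat m *\<^sub>R h x"
proof -
  interpret h: additive h
    by (rule additive.intro) (rule add)
  show ?thesis
    using h.sum[of "\<lambda>_. x" "{..<m}"] by (simp add: sum_constant_scaleR)
qed

lemma additive_halving:
  fixes h :: "'a::real_vector \<Rightarrow> 'b::real_vector"
  assumes add: "\<And>x y. h (x + y) = h x + h y"
  shows "h x = 2 ^ n *\<^sub>R h ((1 / 2 ^ n) *\<^sub>R x)"
  using additive_scaleR_of_nat[of h, OF add, of "2 ^ n" "(1 / 2 ^ n) *\<^sub>R x"] by simp

lemma additive_eq_zero_if_norm_le_powr:
  fixes h :: "'a::real_normed_vector \<Rightarrow> 'b::real_normed_vector"
  assumes add: "\<And>x y. h (x + y) = h x + h y" and "1 < p"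
    and bound: "\<And>x. norm (h x) \<le> C * norm x powr p"
  shows "h x = 0"
proof (rule limit_eq_zero_if_norm_le_null)
  show "(\<lambda>n. h x) \<longlonglongrightarrow> h x"
    by simp
  show "norm (h x) \<le> C * (2 ^ (1 * n) * norm ((1 / 2 ^ n) *\<^sub>R x) powr p)" for n
  proof -
    have "norm (h x) = 2 ^ n * norm (h ((1 / 2 ^ n) *\<^sub>R x))"
      by (subst additive_halving[of h, OF add, of _ n]) simp
    also have "\<dots> \<le> 2 ^ n * (C * norm ((1 / 2 ^ n) *\<^sub>R x) powr p)"
      by (intro mult_left_mono bound) simp
    finally show ?thesis
      by (simp add: algebra_simps)
  qed
  show "(\<lambda>n. C * (2 ^ (1 * n) * norm ((1 / 2 ^ n) *\<^sub>R x) powr p)) \<longlonglongrightarrow> 0"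
    using assms(2) by (intro tendsto_mult_right_zero scaled_norm_powr_tendsto_zero) simp
qed

locale approx_additive =
  fixes f :: "'a::real_normed_vector \<Rightarrow> 'b::banach" and p \<theta> :: real
  assumes one_less_p: "1 < p"
    and approx_add:
      "\<And>x y. norm (f (x + y) - f x - f y) \<le> \<theta> * (norm x powr p + norm y powr p)"
begin

lemma f_zero: "f 0 = 0"
  using approx_add[of 0 0] one_less_p by simp

definition hyers_seq :: "nat \<Rightarrow> 'a \<Rightarrow> 'b" where
  "hyers_seq n x = 2 ^ n *\<^sub>R f ((1 / 2 ^ n) *\<^sub>R x)"

definition hyers_lim :: "'a \<Rightarrow> 'b" where
  "hyers_lim x = lim (\<lambda>n. hyers_seq n x)"

lemma hyers_seq_increment:
  "norm (hyers_seq (Suc n) x - hyers_seq n x)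
     \<le> (\<theta> * norm x powr p * (2 / 2 powr p)) * (2 / 2 powr p) ^ n"
proof -
  define u where "u = (1 / 2 ^ Suc n) *\<^sub>R x"
  have "hyers_seq (Suc n) x - hyers_seq n x = - (2 ^ n *\<^sub>R (f (u + u) - f u - f u))"
    by (simp add: hyers_seq_def u_def scaleR_2[symmetric] algebra_simps)
  then have "norm (hyers_seq (Suc n) x - hyers_seq n x)
      = 2 ^ n * norm (f (u + u) - f u - f u)"
    by simp
  also have "\<dots> \<le> 2 ^ n * (\<theta> * (norm u powr p + norm u powr p))"
    by (intro mult_left_mono approx_add) simp
  also have "\<dots> = (\<theta> * norm x powr p * (2 / 2 powr p)) * (2 / 2 powr p) ^ n"
    by (simp only: u_def norm_scaleR_pow2_powr) (simp add: power_divide)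
  finally show ?thesis .
qed

lemma
  shows hyers_seq_tendsto: "(\<lambda>n. hyers_seq n x) \<longlonglongrightarrow> hyers_lim x"
    and norm_diff_hyers_lim_le:
      "norm (f x - hyers_lim x) \<le> 2 * \<theta> / (2 powr p - 2) * norm x powr p"
proof -
  have "(2::real) < 2 powr p"
    using powr_less_mono[OF one_less_p, of 2] by simp
  then have ratio: "0 \<le> 2 / 2 powr p" "2 / 2 powr p < (1::real)"
    by simp_all
  note conv = geometric_increments_convergent[OF hyers_seq_increment ratio, of x]
  from conv(1) show "(\<lambda>n. hyers_seq n x) \<longlonglongrightarrow> hyers_lim x"
    by (simp add: hyers_lim_def convergent_LIMSEQ_iff)
  have "(\<theta> * norm x powr p * (2 / 2 powr p)) / (1 - 2 / 2 powr p)
      = 2 * \<theta> / (2 powr p - 2) * norm x powr p"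
    using ratio by (simp add: field_simps)
  with conv(2) show "norm (f x - hyers_lim x) \<le> 2 * \<theta> / (2 powr p - 2) * norm x powr p"
    by (simp add: hyers_lim_def hyers_seq_def norm_minus_commute)
qed

lemma hyers_lim_add: "hyers_lim (x + y) = hyers_lim x + hyers_lim y"
proof -
  let ?D = "\<lambda>n. hyers_seq n (x + y) - hyers_seq n x - hyers_seq n y"
  have "?D \<longlonglongrightarrow> hyers_lim (x + y) - hyers_lim x - hyers_lim y"
    by (intro tendsto_diff hyers_seq_tendsto)
  moreover have "norm (?D n) \<le> \<theta> * (2 ^ (1 * n) * norm ((1 / 2 ^ n) *\<^sub>R x) powr p
      + 2 ^ (1 * n) * norm ((1 / 2 ^ n) *\<^sub>R y) powr p)" for n
  proof -
    define u v where "u = (1 / 2 ^ n) *\<^sub>R x" and "v = (1 / 2 ^ n) *\<^sub>R y"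
    have "?D n = 2 ^ n *\<^sub>R (f (u + v) - f u - f v)"
      by (simp add: hyers_seq_def u_def v_def scaleR_add_right scaleR_diff_right)
    then have "norm (?D n) = 2 ^ n * norm (f (u + v) - f u - f v)"
      by simp
    also have "\<dots> \<le> 2 ^ n * (\<theta> * (norm u powr p + norm v powr p))"
      by (intro mult_left_mono approx_add) simp
    finally show ?thesis
      by (simp add: u_def v_def algebra_simps)
  qed
  moreover have "(\<lambda>n. \<theta> * (2 ^ (1 * n) * norm ((1 / 2 ^ n) *\<^sub>R x) powr p
      + 2 ^ (1 * n) * norm ((1 / 2 ^ n) *\<^sub>R y) powr p)) \<longlonglongrightarrow> 0"
    using one_less_p
    by (intro tendsto_mult_right_zero tendsto_add_zero scaled_norm_powr_tendsto_zero) simp_all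
  ultimately have "hyers_lim (x + y) - hyers_lim x - hyers_lim y = 0"
    by (rule limit_eq_zero_if_norm_le_null)
  then show ?thesis
    by (simp add: algebra_simps)
qed

end

lemma unique_additive_approx:
  fixes f H H' :: "'a::real_normed_vector \<Rightarrow> 'b::real_normed_vector"
  assumes "1 < p"
    and add: "\<And>x y. H (x + y) = H x + H y" and add': "\<And>x y. H' (x + y) = H' x + H' y"
    and approx: "\<And>x. norm (f x - H x) \<le> C * norm x powr p"
    and approx': "\<And>x. norm (f x - H' x) \<le> C' * norm x powr p"
  shows "H = H'"
proof
  fix x
  have "H x - H' x = 0"
  proof (rule additive_eq_zero_if_norm_le_powr[where h = "\<lambda>x. H x - H' x"])
    show "H (x + y) - H' (x + y) = H x - H' x + (H y - H' y)" for x y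
      by (simp add: add add')
    show "norm (H y - H' y) \<le> (C + C') * norm y powr p" for y
      using norm_triangle_ineq4[of "f y - H' y" "f y - H y"] approx[of y] approx'[of y]
      by (simp add: algebra_simps)
  qed (fact \<open>1 < p\<close>)
  then show "H x = H' x"
    by simp
qed


section \<open>Approximate homomorphisms of Hilbert modules\<close>

lemma complex_eq_add_units:
  fixes l :: complex
  assumes "cmod l \<le> 2"
  obtains \<mu> \<nu> where "cmod \<mu> = 1" "cmod \<nu> = 1" "l = \<mu> + \<nu>"
proof
  define e where "e = (if l = 0 then 1 else l / complex_of_real (cmod l))"
  define a where "a = cmod l / 2"
  define w where "w = Complex a (sqrt (1 - a\<^sup>2))"
  have "0 \<le> a" "a \<le> 1"
    using assms by (simp_all add: a_def)
  then have "cmod w = 1"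
    by (simp add: w_def complex_norm power_le_one)
  moreover have "cmod e = 1"
    by (simp add: e_def norm_divide)
  ultimately show "cmod (e * w) = 1" "cmod (e * cnj w) = 1"
    by (simp_all add: norm_mult)
  have "w + cnj w = complex_of_real (cmod l)"
    by (simp add: w_def a_def complex_eq_iff)
  then show "l = e * w + e * cnj w"
    by (simp add: e_def flip: distrib_left)
qed

lemma hscale_equivariant_if_unit_equivariant:
  assumes "hilbert_module A M" and "hilbert_module B N"
    and add: "\<And>x y. h (x + y) = h x + h y"
    and unit: "\<And>\<mu> x. cmod \<mu> = 1 \<Longrightarrow> h (hscale M \<mu> x) = hscale N \<mu> (h x)"
  shows "h (hscale M l x) = hscale N l (h x)"
proof -
  interpret hA: hilbert_mod A M by (rule hilbert_mod.intro) fact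
  interpret hB: hilbert_mod B N by (rule hilbert_mod.intro) fact
  define m :: nat where "m = nat \<lceil>cmod l\<rceil> + 1"
  have "cmod l \<le> real m" "0 < m"
    unfolding m_def by linarith+
  then have "cmod (l / of_nat m) \<le> 2"
    by (simp add: norm_divide divide_le_eq)
  then obtain \<mu> \<nu> where units: "cmod \<mu> = 1" "cmod \<nu> = 1" and "l / of_nat m = \<mu> + \<nu>"
    by (rule complex_eq_add_units)
  with \<open>0 < m\<close> have l: "l = complex_of_real (real m) * (\<mu> + \<nu>)"
    by (simp add: field_simps)
  show ?thesis
    unfolding l hA.hscale_mult hB.hscale_mult hA.hscale_real hB.hscale_real
      hA.hscale_addl hB.hscale_addl
    by (simp add: additive_scaleR_of_nat[of h, OF add] add unit units)
qed

locale approx_hmod_hom = hA: hilbert_mod A M + hB: hilbert_mod B N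
  for A :: "('a::{real_normed_algebra,banach}) cstar_ops"
    and M :: "('a, 'x::banach) hmod_ops"
    and B :: "('b::{real_normed_algebra,banach}) cstar_ops"
    and N :: "('b, 'y::banach) hmod_ops" +
  fixes f :: "'x \<Rightarrow> 'y" and p \<theta> :: real
  assumes three_less_p: "3 < p"
    and approx_hscale_add: "\<And>\<mu> x y. cmod \<mu> = 1 \<Longrightarrow>
      norm (f (hscale M \<mu> x + y) - hscale N \<mu> (f x) - f y)
        \<le> \<theta> * (norm x powr p + norm y powr p)"
    and approx_triple: "\<And>x y z.
      norm (f (hact M (hip M x y) z) - hact N (hip N (f x) (f y)) (f z))
        \<le> \<theta> * (norm x powr p + norm y powr p + norm z powr p)"

sublocale approx_hmod_hom \<subseteq> approx_additive f p \<theta>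
  using three_less_p approx_hscale_add[of 1] by unfold_locales simp_all

context approx_hmod_hom
begin

lemma hyers_lim_hscale_unit:
  assumes "cmod \<mu> = 1"
  shows "hyers_lim (hscale M \<mu> x) = hscale N \<mu> (hyers_lim x)"
proof -
  let ?D = "\<lambda>n. hyers_seq n (hscale M \<mu> x) - hscale N \<mu> (hyers_seq n x)"
  have "?D \<longlonglongrightarrow> hyers_lim (hscale M \<mu> x) - hscale N \<mu> (hyers_lim x)"
    by (intro tendsto_diff hyers_seq_tendsto
        bounded_linear.tendsto[OF hB.bounded_linear_hscale])
  moreover have "norm (?D n) \<le> \<theta> * (2 ^ (1 * n) * norm ((1 / 2 ^ n) *\<^sub>R x) powr p)" for n
  proof -
    define u where "u = (1 / 2 ^ n) *\<^sub>R x"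
    have "?D n = 2 ^ n *\<^sub>R (f (hscale M \<mu> u + 0) - hscale N \<mu> (f u) - f 0)"
      by (simp add: hyers_seq_def u_def hA.hscale_scaleR hB.hscale_scaleR f_zero
          scaleR_diff_right)
    then have "norm (?D n)
        = 2 ^ n * norm (f (hscale M \<mu> u + 0) - hscale N \<mu> (f u) - f 0)"
      by simp
    also have "\<dots> \<le> 2 ^ n * (\<theta> * (norm u powr p + norm (0::'x) powr p))"
      by (intro mult_left_mono approx_hscale_add assms) simp
    finally show ?thesis
      by (simp add: u_def algebra_simps)
  qed
  moreover have "(\<lambda>n. \<theta> * (2 ^ (1 * n) * norm ((1 / 2 ^ n) *\<^sub>R x) powr p)) \<longlonglongrightarrow> 0"
    using one_less_p by (intro tendsto_mult_right_zero scaled_norm_powr_tendsto_zero) simp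
  ultimately have "hyers_lim (hscale M \<mu> x) - hscale N \<mu> (hyers_lim x) = 0"
    by (rule limit_eq_zero_if_norm_le_null)
  then show ?thesis
    by simp
qed

lemma hyers_lim_hscale: "hyers_lim (hscale M l x) = hscale N l (hyers_lim x)"
  using hA.hilbert_module hB.hilbert_module hyers_lim_add hyers_lim_hscale_unit
  by (rule hscale_equivariant_if_unit_equivariant)

lemma hyers_lim_triple:
  "hyers_lim (hact M (hip M x y) z) = hact N (hip N (hyers_lim x) (hyers_lim y)) (hyers_lim z)"
proof -
  let ?D = "\<lambda>n. hyers_seq (3 * n) (hact M (hip M x y) z)
      - hact N (hip N (hyers_seq n x) (hyers_seq n y)) (hyers_seq n z)"
  let ?B = "\<lambda>n. \<theta> * (2 ^ (3 * n) * norm ((1 / 2 ^ n) *\<^sub>R x) powr p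
      + 2 ^ (3 * n) * norm ((1 / 2 ^ n) *\<^sub>R y) powr p
      + 2 ^ (3 * n) * norm ((1 / 2 ^ n) *\<^sub>R z) powr p)"
  have "strict_mono (\<lambda>n::nat. 3 * n)"
    by (simp add: strict_mono_def)
  from LIMSEQ_subseq_LIMSEQ[OF hyers_seq_tendsto this]
  have "?D \<longlonglongrightarrow> hyers_lim (hact M (hip M x y) z)
      - hact N (hip N (hyers_lim x) (hyers_lim y)) (hyers_lim z)"
    by (intro tendsto_diff bounded_bilinear.tendsto[OF hB.bounded_bilinear_hact]
        bounded_bilinear.tendsto[OF hB.bounded_bilinear_hip] hyers_seq_tendsto)
      (simp add: o_def)
  moreover have "norm (?D n) \<le> ?B n" for n
  proof -
    define u v w
      where "u = (1 / 2 ^ n) *\<^sub>R x" and "v = (1 / 2 ^ n) *\<^sub>R y" and "w = (1 / 2 ^ n) *\<^sub>R z"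
    have "(1 / 2 ^ (3 * n)) *\<^sub>R hact M (hip M x y) z = hact M (hip M u v) w"
      by (simp add: u_def v_def w_def hA.hact_hip_scaleR power_mult power_divide
          mult.commute[of 3])
    then have "?D n
        = 2 ^ (3 * n) *\<^sub>R (f (hact M (hip M u v) w) - hact N (hip N (f u) (f v)) (f w))"
      by (simp add: hyers_seq_def u_def v_def w_def hB.hact_hip_scaleR scaleR_diff_right
          power_mult mult.commute[of 3])
    then have "norm (?D n)
        = 2 ^ (3 * n) * norm (f (hact M (hip M u v) w) - hact N (hip N (f u) (f v)) (f w))"
      by simp
    also have "\<dots> \<le> 2 ^ (3 * n) * (\<theta> * (norm u powr p + norm v powr p + norm w powr p))"
      by (intro mult_left_mono approx_triple) simp
    finally show ?thesis
      by (simp add: u_def v_def w_def algebra_simps)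
  qed
  moreover have "?B \<longlonglongrightarrow> 0"
    using three_less_p
    by (intro tendsto_mult_right_zero tendsto_add_zero scaled_norm_powr_tendsto_zero) simp_all
  ultimately have "hyers_lim (hact M (hip M x y) z)
      - hact N (hip N (hyers_lim x) (hyers_lim y)) (hyers_lim z) = 0"
    by (rule limit_eq_zero_if_norm_le_null)
  then show ?thesis
    by simp
qed

end

theorem corollary3p4:
  fixes A :: "('a::{real_normed_algebra,banach}) cstar_ops"
    and M :: "('a, 'x::banach) hmod_ops"
    and B :: "('b::{real_normed_algebra,banach}) cstar_ops"
    and N :: "('b, 'y::banach) hmod_ops"
    and f :: "'x \<Rightarrow> 'y" and p \<theta> :: real
  assumes "hilbert_module A M" and "hilbert_module B N"
    and "p > 3" and "\<theta> \<ge> 0"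
    and "\<forall>x y \<mu>. cmod \<mu> = 1 \<longrightarrow>
           norm (f (hscale M \<mu> x + y) - hscale N \<mu> (f x) - f y)
             \<le> \<theta> * (norm x powr p + norm y powr p)"
    and "\<forall>x y z.
           norm (f (hact M (hip M x y) z) - hact N (hip N (f x) (f y)) (f z))
             \<le> \<theta> * (norm x powr p + norm y powr p + norm z powr p)"
    and "\<forall>x y z.
           norm (f (hact M (cstar A (hip M x y)) z) - hact N (cstar B (hip N (f x) (f y))) (f z))
             \<le> \<theta> * (norm x powr p + norm y powr p + norm z powr p)"
  shows "\<exists>!H. hmod_star_hom A M B N H \<and>
           (\<forall>x. norm (f x - H x) \<le> 2 * \<theta> / (2 powr p - 2 ^ 3) * norm x powr p)"
proof -
  interpret approx_hmod_hom A M B N f p \<theta>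
    using assms(1-6) by unfold_locales (simp_all add: hilbert_mod_def)
  let ?C = "2 * \<theta> / (2 powr p - 2 ^ 3)"
  have "(8::real) < 2 powr p"
    using powr_less_mono[OF three_less_p, of 2] by (simp add: powr_numeral)
  then have "2 * \<theta> / (2 powr p - 2) \<le> ?C"
    using assms(4) by (intro divide_left_mono) auto
  then have bound: "norm (f x - hyers_lim x) \<le> ?C * norm x powr p" for x
    by (meson norm_diff_hyers_lim_le mult_right_mono powr_ge_zero order_trans)
  have "hmod_star_hom A M B N hyers_lim"
    by (simp add: hmod_star_hom_def hmod_hom_def hA.cstar_hip hB.cstar_hip
        hyers_lim_add hyers_lim_hscale hyers_lim_triple)
  moreover have "H = hyers_lim"
    if "hmod_star_hom A M B N H" and "\<forall>x. norm (f x - H x) \<le> ?C * norm x powr p" for H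
    using one_less_p _ hyers_lim_add that(2)[rule_format] bound
    by (rule unique_additive_approx)
      (use that(1) in \<open>simp add: hmod_star_hom_def hmod_hom_def\<close>)
  ultimately show ?thesis
    using bound by blast
qed

end
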